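(* Let $G=SL(2,\mathbb{C})$ and let $B_1,B_2\in G$ satisfy $\mathsf{tr}([B_1,B_2])\neq 2$ (where $[B_1,B_2]=B_1B_2B_1^{-1}B_2^{-1}$). Then there exists $g\in G$ such that $A_j:=gB_jg^{-1}$, $j=1,2$, satisfy $A_j^T=A_j$. Let $n\ge 3$ and $\mathbf{r}=(t_1,t_2,t_{12})=(\mathsf{tr}A_1,\mathsf{tr}A_2,\mathsf{tr}(A_1A_2))$. Then for any $\mathbf{s}\in\mathbb{C}^{3n-6}$ there exist $A_3,\dots,A_n\in SL(2,\mathbb{C})$ such that $T_n(A_1,\dots,A_n)=(\mathbf{r},\mathbf{s})$. Moreover, given any $A=(A_1,\dots,A_n)\in G^{\times n}$ with $T_n(A)=(\mathbf{r},\mathbf{s})$, $\mathsf{tr}([A_1,A_2])\neq 2$, $A_1^T=A_1$ and $A_2^T=A_2$, the preimage $T_n^{-1}(\mathbf{r},\mathbf{s})$ consists of the $G$-orbits (under simultaneous conjugation) of the points of the finite set $\{(A_1,A_2,C_3,\dots,C_n): C_j=A_j \text{ or } C_j=A_j^T \text{ for } j=3,\dots,n\}$.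
   Context: $T$ denotes transposition. The Magnus trace map $T_n:G^{\times n}\to\mathbb{C}^{3n-3}$ is $T_n(A_1,\dots,A_n)=(t_1,t_2,t_{12},t_3,t_{13},t_{23},\dots,t_k,t_{1k},t_{2k},\dots,t_n,t_{1n},t_{2n})$, where $t_j=\mathsf{tr}(A_j)$ and $t_{jk}=\mathsf{tr}(A_jA_k)$. $G$ acts on $G^{\times n}$ by $g\cdot(A_1,\dots,A_n)=(gA_1g^{-1},\dots,gA_ng^{-1})$. *)

theory Defs
  imports "HOL-Analysis.Analysis"
begin

type_synonym mat2 = "complex^2^2"

definition SL2 :: "mat2 set" where
  "SL2 = {A. det A = 1}"

definition commutator :: "mat2 \<Rightarrow> mat2 \<Rightarrow> mat2" where
  "commutator X Y = X ** Y ** matrix_inv X ** matrix_inv Y"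

definition conj :: "mat2 \<Rightarrow> mat2 \<Rightarrow> mat2" where
  "conj g X = g ** X ** matrix_inv g"

text \<open>Tuples (A_1,...,A_n) are lists of length n; A_j is the list entry at index j-1.
  The Magnus trace map T_n, with values in C^(3n-3) represented as a list of length 3n-3.\<close>
definition magnus_trace :: "mat2 list \<Rightarrow> complex list" where
  "magnus_trace A =
     [trace (A!0), trace (A!1), trace (A!0 ** A!1)] @
     concat (map (\<lambda>k. [trace (A!k), trace (A!0 ** A!k), trace (A!1 ** A!k)]) [2..<length A])"

definition conj_tuple :: "mat2 \<Rightarrow> mat2 list \<Rightarrow> mat2 list" where
  "conj_tuple g A = map (conj g) A"

definition tuples :: "nat \<Rightarrow> mat2 list set" where
  "tuples n = {A. length A = n \<and> set A \<subseteq> SL2}"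

end

(* If tr [B1, B2] /= 2, then K = B1 B2 - B2 B1 is invertible. K is traceless and orthogonal to
   B1 and B2 for the trace form, so conjugating K / sqrt (det K) to J = [[0, 1], [-1, 0]] makes
   both matrices trace-orthogonal to J, which for 2x2 matrices means symmetric.
   Two pairs with tr [X0, X1] /= 2 and the same traces tr X0, tr X1, tr X0 X1 are simultaneously
   conjugate: both are conjugate to a normal form computed in the basis (e, X1 e), where e is an
   eigenvector of X0.
   For a symmetric pair (A1, A2) with tr [A1, A2] /= 2, the traces of Y, A1 Y and A2 Y form a
   linear system in y11, y22 and y12 + y21 of determinant -delta, where
   delta^2 = det (A1 A2 - A2 A1) /= 0. Together with det Y = 1, which fixes y12 y21, these traces
   take every value and determine Y up to transposition. Hence a
   tuple in the fibre of the Magnus trace map can be conjugated so that its first two entries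
   become A1, A2, and then every further entry is A_j or its transpose. *)

theory Submission
  imports Defs
begin

definition matrix2 :: "'a \<Rightarrow> 'a \<Rightarrow> 'a \<Rightarrow> 'a \<Rightarrow> 'a^2^2" where
  "matrix2 a b c d = (\<chi> i j. if i = 1 then (if j = 1 then a else b) else (if j = 1 then c else d))"

lemma matrix2_nth [simp]:
  "matrix2 a b c d $ 1 $ 1 = a" "matrix2 a b c d $ 1 $ 2 = b"
  "matrix2 a b c d $ 2 $ 1 = c" "matrix2 a b c d $ 2 $ 2 = d"
  by (simp_all add: matrix2_def)

lemma matrix2_eta: "matrix2 (A$1$1) (A$1$2) (A$2$1) (A$2$2) = A"
  by (simp add: matrix2_def vec_eq_iff forall_2)

lemma matrix2_cases: obtains a b c d where "A = matrix2 a b c d"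
  by (metis matrix2_eta)

lemma matrix2_eq_iff [simp]:
  "matrix2 a b c d = matrix2 a' b' c' d' \<longleftrightarrow> a = a' \<and> b = b' \<and> c = c' \<and> d = d'"
  by (metis matrix2_nth)

lemma matrix2_mult [simp]:
  fixes a b c d :: "'a::semiring_1"
  shows "matrix2 a b c d ** matrix2 a' b' c' d' =
    matrix2 (a*a' + b*c') (a*b' + b*d') (c*a' + d*c') (c*b' + d*d')"
  by (simp add: matrix2_def matrix_matrix_mult_def vec_eq_iff forall_2 sum_2)

lemma matrix2_diff [simp]:
  fixes a b c d :: "'a::ab_group_add"
  shows "matrix2 a b c d - matrix2 a' b' c' d' = matrix2 (a - a') (b - b') (c - c') (d - d')"
  by (simp add: matrix2_def vec_eq_iff forall_2)

lemma det_matrix2 [simp]: "det (matrix2 a b c d :: 'a::comm_ring_1^2^2) = a*d - b*c"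
  by (simp add: det_2)

lemma trace_matrix2 [simp]: "trace (matrix2 a b c d :: 'a::semiring_1^2^2) = a + d"
  by (simp add: trace_def sum_2)

lemma transpose_matrix2 [simp]: "transpose (matrix2 a b c d) = matrix2 a c b d"
  by (simp add: matrix2_def transpose_def vec_eq_iff forall_2)

lemma mat_1_matrix2: "mat 1 = matrix2 1 0 0 (1::'a::zero_neq_one)"
  by (simp add: matrix2_def mat_def vec_eq_iff forall_2)

lemma invertible_matrix_inv:
  assumes "invertible A"
  shows "A ** matrix_inv A = mat 1" "matrix_inv A ** A = mat 1"
  using someI_ex[OF assms[unfolded invertible_def]] by (simp_all add: matrix_inv_def)

lemma matrix_inv_unique:
  fixes A B :: "'a::field^'n^'n"
  assumes "A ** B = mat 1"
  shows "matrix_inv A = B"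
proof -
  have "invertible A" using assms invertible_right_inverse by blast
  then show ?thesis
    by (metis assms invertible_matrix_inv(2) matrix_mul_assoc matrix_mul_lid matrix_mul_rid)
qed

lemma det_matrix_inv:
  fixes A :: "'a::field^'n^'n"
  assumes "invertible A"
  shows "det (matrix_inv A) = inverse (det A)"
  by (metis assms det_I det_mul invertible_matrix_inv(1) inverse_unique)

lemma intertwiner_matrix_inv:
  fixes P X N :: "'a::semiring_1^'n^'n"
  assumes "invertible P" "X ** P = P ** N"
  shows "matrix_inv P ** X = N ** matrix_inv P"
  by (metis assms invertible_matrix_inv matrix_mul_assoc matrix_mul_lid matrix_mul_rid)

lemma matrix_inv_matrix2:
  fixes a b c d :: "'a::field"
  assumes "a*d - b*c = 1"
  shows "matrix_inv (matrix2 a b c d) = matrix2 d (-b) (-c) a"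
  by (rule matrix_inv_unique) (use assms in \<open>simp add: mat_1_matrix2 algebra_simps\<close>)

lemma SL2_invertible: "g \<in> SL2 \<Longrightarrow> invertible g"
  by (simp add: SL2_def invertible_det_nz)

lemma SL2_mult: "g \<in> SL2 \<Longrightarrow> h \<in> SL2 \<Longrightarrow> g ** h \<in> SL2"
  by (simp add: SL2_def det_mul)

lemma matrix_inv_SL2:
  assumes "g \<in> SL2"
  shows "matrix_inv g \<in> SL2"
  using assms det_matrix_inv[OF SL2_invertible[OF assms]] by (simp add: SL2_def)

lemma transpose_SL2: "g \<in> SL2 \<Longrightarrow> transpose g \<in> SL2"
  by (simp add: SL2_def)

lemma conj_mult:
  assumes "invertible g"
  shows "conj g (X ** Y) = conj g X ** conj g Y"
  using invertible_matrix_inv(2)[OF assms]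
  by (simp add: conj_def matrix_mul_assoc) (metis matrix_mul_assoc matrix_mul_lid)

lemma trace_conj:
  assumes "invertible g"
  shows "trace (conj g X) = trace X"
  by (metis assms conj_def invertible_matrix_inv(2) matrix_mul_assoc matrix_mul_lid trace_mul_sym)

lemma det_conj:
  assumes "invertible g"
  shows "det (conj g X) = det X"
  using det_matrix_inv[OF assms] assms
  by (simp add: conj_def det_mul invertible_det_nz)

lemma conj_SL2:
  assumes "g \<in> SL2" "X \<in> SL2"
  shows "conj g X \<in> SL2"
  using assms det_conj[OF SL2_invertible[OF assms(1)]] by (simp add: SL2_def)

lemma conj_matrix_inv_conj:
  assumes "invertible g"
  shows "conj (matrix_inv g) (conj g X) = X"
proof -
  have "matrix_inv (matrix_inv g) = g"
    using invertible_matrix_inv(2)[OF assms] by (rule matrix_inv_unique)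
  then show ?thesis
    using invertible_matrix_inv[OF assms]
    by (simp add: conj_def matrix_mul_assoc) (metis matrix_mul_assoc matrix_mul_rid)
qed

lemma conj_eqI:
  assumes "invertible h" "h ** X = Y ** h"
  shows "conj h X = Y"
  by (metis assms conj_def invertible_matrix_inv(1) matrix_mul_assoc matrix_mul_rid)

lemma SL2_matrix2:
  assumes "X \<in> SL2"
  obtains a b c d where "X = matrix2 a b c d" "a*d - b*c = 1"
proof -
  obtain a b c d where "X = matrix2 a b c d" by (rule matrix2_cases)
  with assms that show thesis by (simp add: SL2_def)
qed

lemma trace_transpose: "trace (transpose A) = trace (A::'a::semiring_1^'n^'n)"
  by (simp add: trace_def transpose_def)

lemma trace_mult_transpose_symmetric:
  fixes S B :: "'a::comm_semiring_1^'n^'n"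
  assumes "transpose S = S"
  shows "trace (S ** transpose B) = trace (S ** B)"
  by (metis assms matrix_transpose_mul trace_mul_sym trace_transpose)

lemma trace_mult_diff_right:
  fixes X A B :: "'a::comm_ring_1^'n^'n"
  shows "trace (X ** (A - B)) = trace (X ** A) - trace (X ** B)"
  by (simp add: trace_def matrix_matrix_mult_def right_diff_distrib sum_subtractf)

lemma trace_mult_Lie_bracket:
  fixes X Y :: "'a::comm_ring_1^'n^'n"
  shows "trace (X ** (X ** Y - Y ** X)) = 0" and "trace (Y ** (X ** Y - Y ** X)) = 0"
  by (simp_all add: trace_mult_diff_right) (metis matrix_mul_assoc trace_mul_sym)+

lemma trace_commutator_SL2:
  assumes "X \<in> SL2" "Y \<in> SL2"
  shows "trace (commutator X Y) =
    trace X ^ 2 + trace Y ^ 2 + trace (X ** Y) ^ 2 - trace X * trace Y * trace (X ** Y) - 2"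
proof -
  obtain a b c d where X: "X = matrix2 a b c d" "a*d - b*c = 1" using assms(1) by (rule SL2_matrix2)
  obtain e f g h where Y: "Y = matrix2 e f g h" "e*h - f*g = 1" using assms(2) by (rule SL2_matrix2)
  show ?thesis
    using X(2) Y(2) unfolding commutator_def X(1) Y(1)
    by (simp add: matrix_inv_matrix2) algebra
qed

lemma det_Lie_bracket_SL2:
  assumes "X \<in> SL2" "Y \<in> SL2"
  shows "det (X ** Y - Y ** X) = 2 - trace (commutator X Y)"
proof -
  obtain a b c d where X: "X = matrix2 a b c d" "a*d - b*c = 1" using assms(1) by (rule SL2_matrix2)
  obtain e f g h where Y: "Y = matrix2 e f g h" "e*h - f*g = 1" using assms(2) by (rule SL2_matrix2)
  show ?thesis
    using X(2) Y(2) unfolding commutator_def X(1) Y(1)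
    by (simp add: matrix_inv_matrix2) algebra
qed

lemma trace_commutator_conj:
  assumes "g \<in> SL2" "X \<in> SL2" "Y \<in> SL2"
  shows "trace (commutator (conj g X) (conj g Y)) = trace (commutator X Y)"
proof -
  have "invertible g" using assms(1) by (rule SL2_invertible)
  then show ?thesis
    using assms conj_SL2
    by (simp add: trace_commutator_SL2 trace_conj conj_mult[symmetric])
qed

section \<open>Simultaneous symmetrization\<close>

definition J :: mat2 where
  "J = matrix2 0 1 (-1) 0"

lemma symmetric_iff_trace_mult_J: "transpose X = X \<longleftrightarrow> trace (X ** J) = 0"
  by (cases X rule: matrix2_cases) (auto simp: J_def)

lemma traceless_SL2_conj_J:
  assumes "M \<in> SL2" "trace M = 0"
  shows "\<exists>g\<in>SL2. conj g M = J"
proof -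
  obtain m1 m2 m3 m4 where M: "M = matrix2 m1 m2 m3 m4" "m1*m4 - m2*m3 = 1"
    using assms(1) by (rule SL2_matrix2)
  have m4: "m4 = - m1" using assms(2) M(1) by (simp add: eq_neg_iff_add_eq_0 add.commute)
  have "\<exists>p q. p*p*m2 - 2*p*q*m1 - q*q*m3 \<noteq> 0"
  proof (cases "m2 = 0 \<and> m3 = 0")
    case True
    then have "m1 \<noteq> 0" using M(2) by auto
    with True show ?thesis by (intro exI[of _ 1]) simp
  next
    case False
    then consider "m2 \<noteq> 0" | "m3 \<noteq> 0" by blast
    then show ?thesis
    proof cases
      case 1 then show ?thesis by (intro exI[of _ 1] exI[of _ 0]) simp
    next
      case 2 then show ?thesis by (intro exI[of _ 0] exI[of _ 1]) simp
    qed
  qed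
  then obtain p q where pq: "p*p*m2 - 2*p*q*m1 - q*q*m3 \<noteq> 0" by blast
  define t where "t = csqrt (p*p*m2 - 2*p*q*m1 - q*q*m3)"
  have t: "t^2 = p*p*m2 - 2*p*q*m1 - q*q*m3" "t \<noteq> 0" using pq by (auto simp: t_def)
  \<comment> \<open>The rows of g are v = (p, q) and v M, rescaled; since M^2 = -1, this gives J g = g M.\<close>
  define g where "g = matrix2 (p/t) (q/t) ((p*m1 + q*m3)/t) ((p*m2 - q*m1)/t)"
  have "det g = (p*p*m2 - 2*p*q*m1 - q*q*m3) / t^2"
    using t(2) by (simp add: g_def power2_eq_square field_simps)
  then have "g \<in> SL2" using t pq by (simp add: SL2_def)
  moreover have "g ** M = J ** g"
    using M(2) t(2) unfolding g_def J_def M(1) m4 by (simp add: field_simps) algebra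
  ultimately show ?thesis using conj_eqI SL2_invertible by blast
qed

lemma ex_SL2_conj_symmetric:
  assumes "det (B1 ** B2 - B2 ** B1) \<noteq> 0"
  shows "\<exists>g\<in>SL2. transpose (conj g B1) = conj g B1 \<and> transpose (conj g B2) = conj g B2"
proof -
  define K where "K = B1 ** B2 - B2 ** B1"
  have dK: "det K \<noteq> 0" using assms by (simp add: K_def)
  obtain k1 k2 k3 k4 where K: "K = matrix2 k1 k2 k3 k4" by (rule matrix2_cases)
  define \<sigma> where "\<sigma> = csqrt (det K)"
  have \<sigma>: "\<sigma>^2 = det K" "\<sigma> \<noteq> 0" using dK by (auto simp: \<sigma>_def)
  define M where "M = matrix2 (k1/\<sigma>) (k2/\<sigma>) (k3/\<sigma>) (k4/\<sigma>)"
  have trace_M: "trace (B ** M) = trace (B ** K) / \<sigma>" for B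
    using \<sigma>(2) by (cases B rule: matrix2_cases) (simp add: M_def K field_simps)
  have "det M = det K / \<sigma>^2"
    using \<sigma>(2) by (simp add: M_def K power2_eq_square field_simps)
  then have "M \<in> SL2" using \<sigma> dK by (simp add: SL2_def)
  moreover have "trace K = 0" using trace_mul_sym[of B1 B2] by (simp add: K_def trace_sub)
  then have "trace M = 0" by (simp add: M_def K add_divide_distrib[symmetric])
  ultimately obtain g where g: "g \<in> SL2" "conj g M = J" using traceless_SL2_conj_J by blast
  have symmetric: "transpose (conj g B) = conj g B" if "trace (B ** K) = 0" for B
  proof -
    have "trace (conj g B ** J) = trace (B ** M)"
      using g SL2_invertible by (metis conj_mult trace_conj)
    also have "\<dots> = 0" using trace_M that by simp
    finally show ?thesis by (simp add: symmetric_iff_trace_mult_J)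
  qed
  moreover have "trace (B1 ** K) = 0" and "trace (B2 ** K) = 0"
    unfolding K_def by (rule trace_mult_Lie_bracket)+
  ultimately show ?thesis using g(1) by blast
qed

section \<open>Pairs with equal traces are conjugate\<close>

lemma singular_matrix2_kernel:
  fixes m1 m2 m3 m4 :: "'a::field"
  assumes "m1*m4 - m2*m3 = 0"
  obtains e1 e2 where "e1 \<noteq> 0 \<or> e2 \<noteq> 0" "m1*e1 + m2*e2 = 0" "m3*e1 + m4*e2 = 0"
proof (cases "m1 = 0 \<and> m2 = 0")
  case True
  show thesis
  proof (cases "m3 = 0 \<and> m4 = 0")
    case False
    then show thesis using True by (intro that[of m4 "-m3"]) (auto simp: algebra_simps)
  qed (use True in \<open>intro that[of 1 0]; simp\<close>)
next
  case False
  then show thesis using assms by (intro that[of m2 "-m1"]) (auto simp: algebra_simps)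
qed

lemma SL2_pair_normal_form:
  assumes X: "X \<in> SL2" and Y: "Y \<in> SL2" and XY: "det (X ** Y - Y ** X) \<noteq> 0"
    and \<mu>: "\<mu>^2 - trace X * \<mu> + 1 = 0"
  obtains P where "P \<in> SL2"
    "X ** P = P ** matrix2 \<mu> (trace (X ** Y) - trace X * trace Y + \<mu> * trace Y) 0 (trace X - \<mu>)"
    "Y ** P = P ** matrix2 0 (-1) 1 (trace Y)"
proof -
  obtain x1 x2 x3 x4 where Xc: "X = matrix2 x1 x2 x3 x4" "x1*x4 - x2*x3 = 1"
    using X by (rule SL2_matrix2)
  obtain y1 y2 y3 y4 where Yc: "Y = matrix2 y1 y2 y3 y4" "y1*y4 - y2*y3 = 1"
    using Y by (rule SL2_matrix2)
  have "(x1 - \<mu>)*(x4 - \<mu>) - x2*x3 = 0"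
    using \<mu> Xc(2) unfolding Xc(1) by (simp add: power2_eq_square) algebra
  then obtain e1 e2 where e: "e1 \<noteq> 0 \<or> e2 \<noteq> 0" "(x1 - \<mu>)*e1 + x2*e2 = 0" "x3*e1 + (x4 - \<mu>)*e2 = 0"
    by (rule singular_matrix2_kernel)
  \<comment> \<open>The columns of P are the eigenvector e of X and Y e, rescaled. They are independent, since a
    common eigenvector of X and Y would make X Y - Y X singular.\<close>
  define w1 where "w1 = y1*e1 + y2*e2"
  define w2 where "w2 = y3*e1 + y4*e2"
  have d: "e1*w2 - w1*e2 \<noteq> 0"
  proof
    assume "e1*w2 - w1*e2 = 0"
    then have "e1 * e1 * det (X ** Y - Y ** X) = 0" and "e2 * e2 * det (X ** Y - Y ** X) = 0"
      using e(2,3) unfolding Xc(1) Yc(1) w1_def w2_def by (simp_all; algebra)+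
    with e(1) XY show False by auto
  qed
  define \<tau> where "\<tau> = csqrt (e1*w2 - w1*e2)"
  have \<tau>: "\<tau>^2 = e1*w2 - w1*e2" "\<tau> \<noteq> 0" using d by (auto simp: \<tau>_def)
  define P where "P = matrix2 (e1/\<tau>) (w1/\<tau>) (e2/\<tau>) (w2/\<tau>)"
  have "det P = (e1*w2 - w1*e2) / \<tau>^2"
    using \<tau>(2) by (simp add: P_def power2_eq_square field_simps)
  then have "P \<in> SL2" using \<tau> d by (simp add: SL2_def)
  moreover have "X ** P = P ** matrix2 \<mu> (trace (X ** Y) - trace X * trace Y + \<mu> * trace Y) 0 (trace X - \<mu>)"
    using e(2,3) Xc(2) Yc(2) \<tau>(2) unfolding Xc(1) Yc(1) P_def w1_def w2_def
    by (simp add: field_simps) algebra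
  moreover have "Y ** P = P ** matrix2 0 (-1) 1 (trace Y)"
    using Yc(2) \<tau>(2) unfolding Yc(1) P_def w1_def w2_def by (simp add: field_simps)
  ultimately show thesis by (rule that)
qed

lemma ex_SL2_conj_pair_eq_traces:
  assumes X0: "X0 \<in> SL2" and X1: "X1 \<in> SL2" and A0: "A0 \<in> SL2" and A1: "A1 \<in> SL2"
    and traces: "trace X0 = trace A0" "trace X1 = trace A1" "trace (X0 ** X1) = trace (A0 ** A1)"
    and irreducible: "trace (commutator X0 X1) \<noteq> 2"
  shows "\<exists>h\<in>SL2. conj h X0 = A0 \<and> conj h X1 = A1"
proof -
  have "trace (commutator A0 A1) = trace (commutator X0 X1)"
    using assms by (simp add: trace_commutator_SL2)
  then have dX: "det (X0 ** X1 - X1 ** X0) \<noteq> 0" and dA: "det (A0 ** A1 - A1 ** A0) \<noteq> 0"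
    using assms by (simp_all add: det_Lie_bracket_SL2)
  define \<mu> where "\<mu> = (trace X0 + csqrt (trace X0 ^ 2 - 4)) / 2"
  have \<mu>: "\<mu>^2 - trace X0 * \<mu> + 1 = 0"
    using power2_csqrt[of "trace X0 ^ 2 - 4"] unfolding \<mu>_def
    by (simp add: power2_eq_square field_simps) algebra
  obtain P where P: "P \<in> SL2"
    "X0 ** P = P ** matrix2 \<mu> (trace (X0 ** X1) - trace X0 * trace X1 + \<mu> * trace X1) 0 (trace X0 - \<mu>)"
    "X1 ** P = P ** matrix2 0 (-1) 1 (trace X1)"
    using SL2_pair_normal_form[OF X0 X1 dX \<mu>] .
  obtain Q where Q: "Q \<in> SL2"
    "A0 ** Q = Q ** matrix2 \<mu> (trace (X0 ** X1) - trace X0 * trace X1 + \<mu> * trace X1) 0 (trace X0 - \<mu>)"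
    "A1 ** Q = Q ** matrix2 0 (-1) 1 (trace X1)"
    using SL2_pair_normal_form[OF A0 A1 dA, of \<mu>] \<mu> unfolding traces by blast
  define h where "h = Q ** matrix_inv P"
  have h: "h \<in> SL2" using P(1) Q(1) by (simp add: h_def SL2_mult matrix_inv_SL2)
  have "h ** X = A ** h" if "X ** P = P ** N" "A ** Q = Q ** N" for X A N
    using intertwiner_matrix_inv[OF SL2_invertible[OF P(1)] that(1)] that(2)
    by (metis h_def matrix_mul_assoc)
  then have "h ** X0 = A0 ** h" and "h ** X1 = A1 ** h" using P Q by blast+
  then show ?thesis using h SL2_invertible conj_eqI by blast
qed

section \<open>Traces against a symmetric pair\<close>

lemma symmetric_matrix2:
  assumes "transpose A = A"
  obtains p q r where "A = matrix2 p q q r"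
proof
  have "A $ 2 $ 1 = transpose A $ 1 $ 2" by (simp add: transpose_def)
  with assms show "A = matrix2 (A$1$1) (A$1$2) (A$1$2) (A$2$2)" by (metis matrix2_eta)
qed

lemma det_Lie_bracket_symmetric:
  fixes p q r p' q' r' :: "'a::comm_ring_1"
  shows "det (matrix2 p q q r ** matrix2 p' q' q' r' - matrix2 p' q' q' r' ** matrix2 p q q r) =
    ((p - r) * q' - (p' - r') * q)^2"
  by (simp add: power2_eq_square algebra_simps)

lemma trace_symmetric_mult:
  fixes p q r :: "'a::comm_ring_1"
  shows "trace (matrix2 p q q r ** matrix2 y1 y2 y3 y4) = (p - r) * y1 + q * (y2 + y3) + r * (y1 + y4)"
  by (simp add: algebra_simps)

lemma solve_linear_2x2:
  fixes a b c d u v :: "'a::field"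
  assumes "a * d - b * c \<noteq> 0"
  obtains s t where "a * s + b * t = u" "c * s + d * t = v"
proof
  show "a * ((u * d - b * v) / (a * d - b * c)) + b * ((a * v - u * c) / (a * d - b * c)) = u"
    and "c * ((u * d - b * v) / (a * d - b * c)) + d * ((a * v - u * c) / (a * d - b * c)) = v"
    using assms by (simp_all add: divide_simps) (simp_all add: algebra_simps)
qed

definition trace_triple :: "'a::semiring_1^'n^'n \<Rightarrow> 'a^'n^'n \<Rightarrow> 'a^'n^'n \<Rightarrow> 'a list" where
  "trace_triple A0 A1 Y = [trace Y, trace (A0 ** Y), trace (A1 ** Y)]"

lemma trace_triple_surj_symmetric:
  assumes "transpose A0 = A0" "transpose A1 = A1" "det (A0 ** A1 - A1 ** A0) \<noteq> 0"
  shows "\<exists>Y\<in>SL2. trace_triple A0 A1 Y = [x, y, z]"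
proof -
  obtain p q r where A0: "A0 = matrix2 p q q r" using assms(1) by (rule symmetric_matrix2)
  obtain p' q' r' where A1: "A1 = matrix2 p' q' q' r'" using assms(2) by (rule symmetric_matrix2)
  have "(p - r) * q' - q * (p' - r') \<noteq> 0"
    using assms(3) unfolding A0 A1 det_Lie_bracket_symmetric by (simp add: algebra_simps)
  then obtain d s where lin: "(p - r) * d + q * s = y - r*x" "(p' - r') * d + q' * s = z - r'*x"
    by (rule solve_linear_2x2)
  define w where "w = csqrt (s^2/4 - d*(x - d) + 1)"
  define Y where "Y = matrix2 d (s/2 + w) (s/2 - w) (x - d)"
  have "Y \<in> SL2"
    using power2_csqrt[of "s^2/4 - d*(x - d) + 1"]
    by (simp add: Y_def SL2_def w_def power2_eq_square algebra_simps)
  moreover have "trace_triple A0 A1 Y = [x, y, z]"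
    using lin unfolding trace_triple_def Y_def A0 A1 trace_symmetric_mult by (simp add: algebra_simps)
  ultimately show ?thesis by blast
qed

lemma trace_triple_inj_symmetric:
  assumes "transpose A0 = A0" "transpose A1 = A1" "det (A0 ** A1 - A1 ** A0) \<noteq> 0"
    and "Y \<in> SL2" "Z \<in> SL2" "trace_triple A0 A1 Y = trace_triple A0 A1 Z"
  shows "Y = Z \<or> Y = transpose Z"
proof -
  obtain p q r where A0: "A0 = matrix2 p q q r" using assms(1) by (rule symmetric_matrix2)
  obtain p' q' r' where A1: "A1 = matrix2 p' q' q' r'" using assms(2) by (rule symmetric_matrix2)
  define \<delta> where "\<delta> = (p - r) * q' - (p' - r') * q"
  have \<delta>: "\<delta> \<noteq> 0" using assms(3) unfolding A0 A1 det_Lie_bracket_symmetric \<delta>_def by simp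
  obtain y1 y2 y3 y4 where Y: "Y = matrix2 y1 y2 y3 y4" "y1*y4 - y2*y3 = 1"
    using assms(4) by (rule SL2_matrix2)
  obtain z1 z2 z3 z4 where Z: "Z = matrix2 z1 z2 z3 z4" "z1*z4 - z2*z3 = 1"
    using assms(5) by (rule SL2_matrix2)
  have eqs: "y1 + y4 = z1 + z4"
    "(p - r) * y1 + q * (y2 + y3) = (p - r) * z1 + q * (z2 + z3)"
    "(p' - r') * y1 + q' * (y2 + y3) = (p' - r') * z1 + q' * (z2 + z3)"
    using assms(6) unfolding trace_triple_def A0 A1 Y(1) Z(1) trace_symmetric_mult by auto
  have "\<delta> * (y1 - z1) = 0" and "\<delta> * (y2 + y3 - (z2 + z3)) = 0"
    using eqs unfolding \<delta>_def by algebra+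
  with \<delta> have diag: "y1 = z1" "y4 = z4" and sum: "y2 + y3 = z2 + z3"
    using eqs(1) by simp_all
  with Y(2) Z(2) have "(y2 - z2) * (y2 - z3) = 0" by algebra
  then show ?thesis using diag sum by (auto simp: Y(1) Z(1))
qed

section \<open>The Magnus trace map\<close>

lemma magnus_trace_conv:
  "magnus_trace A = [trace (A!0), trace (A!1), trace (A!0 ** A!1)] @
     concat (map (\<lambda>k. trace_triple (A!0) (A!1) (A!k)) [2..<length A])"
  by (simp add: magnus_trace_def trace_triple_def)

lemma magnus_trace_Cons2:
  "magnus_trace (A0 # A1 # As) =
     [trace A0, trace A1, trace (A0 ** A1)] @ concat (map (trace_triple A0 A1) As)"
proof -
  have "[2..<length (A0 # A1 # As)] = map (\<lambda>i. i + 2) [0..<length As]"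
    unfolding map_add_upt by (simp del: upt_Suc)
  then have "map (\<lambda>k. trace_triple A0 A1 ((A0 # A1 # As) ! k)) [2..<length (A0 # A1 # As)] =
      map (trace_triple A0 A1) As"
    by (auto intro: nth_equalityI)
  then show ?thesis by (simp add: magnus_trace_conv)
qed

lemma magnus_trace_eq_iff:
  assumes "length X = length A"
  shows "magnus_trace X = magnus_trace A \<longleftrightarrow>
    trace (X!0) = trace (A!0) \<and> trace (X!1) = trace (A!1) \<and> trace (X!0 ** X!1) = trace (A!0 ** A!1) \<and>
    (\<forall>k\<in>{2..<length A}. trace_triple (X!0) (X!1) (X!k) = trace_triple (A!0) (A!1) (A!k))"
proof -
  have "concat (map (\<lambda>k. trace_triple (X!0) (X!1) (X!k)) ks) =
      concat (map (\<lambda>k. trace_triple (A!0) (A!1) (A!k)) ks) \<longleftrightarrow>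
    (\<forall>k\<in>set ks. trace_triple (X!0) (X!1) (X!k) = trace_triple (A!0) (A!1) (A!k))" for ks
    by (subst concat_eq_concat_iff) (auto simp: set_zip trace_triple_def)
  then show ?thesis using assms by (simp add: magnus_trace_conv)
qed

lemma ex_concat_map_eq:
  assumes surj: "\<And>x y z. \<exists>a\<in>S. f a = [x, y, z]" and "length s = 3 * m"
  shows "\<exists>as. length as = m \<and> set as \<subseteq> S \<and> concat (map f as) = s"
  using assms(2)
proof (induction m arbitrary: s)
  case (Suc m)
  then have "length s = Suc (Suc (Suc (3 * m)))" by simp
  then obtain x y z t where s: "s = x # y # z # t" and t: "length t = 3 * m"
    by (auto simp: length_Suc_conv)
  obtain a where "a \<in> S" "f a = [x, y, z]" using surj by blast
  moreover obtain as where "length as = m" "set as \<subseteq> S" "concat (map f as) = t"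
    using Suc.IH[OF t] by blast
  ultimately show ?case by (intro exI[of _ "a # as"]) (simp add: s)
qed simp

lemma magnus_trace_surj_symmetric:
  assumes "transpose A1 = A1" "transpose A2 = A2" "det (A1 ** A2 - A2 ** A1) \<noteq> 0"
    and "length s = 3 * m"
  shows "\<exists>As. length As = m \<and> set As \<subseteq> SL2 \<and>
    magnus_trace ([A1, A2] @ As) = [trace A1, trace A2, trace (A1 ** A2)] @ s"
proof -
  obtain As where "length As = m" "set As \<subseteq> SL2" "concat (map (trace_triple A1 A2) As) = s"
    using ex_concat_map_eq[OF trace_triple_surj_symmetric[OF assms(1-3)] assms(4)] by blast
  then show ?thesis by (auto simp: magnus_trace_Cons2)
qed

definition partial_transposes :: "nat \<Rightarrow> ('a^'n^'n) list \<Rightarrow> ('a^'n^'n) list set" where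
  "partial_transposes n A = {C. length C = n \<and> C!0 = A!0 \<and> C!1 = A!1 \<and>
     (\<forall>j\<in>{2..<n}. C!j = A!j \<or> C!j = transpose (A!j))}"

lemma partial_transposes_nth:
  assumes "C \<in> partial_transposes n A" "j < n"
  shows "C!j = A!j \<or> C!j = transpose (A!j)"
  using assms less_2_cases[of j] by (cases "j < 2") (auto simp: partial_transposes_def)

lemma finite_partial_transposes: "finite (partial_transposes n A)"
proof (rule finite_subset)
  let ?entries = "(!) A ` {..<n} \<union> transpose ` (!) A ` {..<n}"
  show "partial_transposes n A \<subseteq> {C. set C \<subseteq> ?entries \<and> length C = n}"
  proof
    fix C assume C: "C \<in> partial_transposes n A"
    then have len: "length C = n" by (simp add: partial_transposes_def)
    have "set C \<subseteq> ?entries"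
    proof
      fix x assume "x \<in> set C"
      then obtain j where "j < n" "x = C!j" using len by (auto simp: in_set_conv_nth)
      then show "x \<in> ?entries" using partial_transposes_nth[OF C, of j] by auto
    qed
    with len show "C \<in> {C. set C \<subseteq> ?entries \<and> length C = n}" by simp
  qed
qed (simp add: finite_lists_length_eq)

lemma tuples_nth: "A \<in> tuples n \<Longrightarrow> j < n \<Longrightarrow> A!j \<in> SL2"
  by (auto simp: tuples_def)

lemma partial_transposes_tuples:
  assumes A: "A \<in> tuples n" and C: "C \<in> partial_transposes n A"
  shows "C \<in> tuples n"
proof -
  have "C!j \<in> SL2" if "j < n" for j
    using partial_transposes_nth[OF C that] tuples_nth[OF A that] transpose_SL2 by metis
  moreover have "length C = n" using C by (simp add: partial_transposes_def)
  ultimately show ?thesis by (auto simp: tuples_def in_set_conv_nth)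
qed

lemma magnus_trace_partial_transposes:
  assumes "transpose (A!0) = A!0" "transpose (A!1) = A!1" "length A = n" "C \<in> partial_transposes n A"
  shows "magnus_trace C = magnus_trace A"
proof -
  have "trace_triple (A!0) (A!1) (C!k) = trace_triple (A!0) (A!1) (A!k)" if "k < n" for k
    using partial_transposes_nth[OF assms(4) that] trace_mult_transpose_symmetric[OF assms(1)]
      trace_mult_transpose_symmetric[OF assms(2)]
    by (auto simp: trace_triple_def trace_transpose)
  with assms(3,4) show ?thesis
    by (auto simp: magnus_trace_eq_iff partial_transposes_def)
qed

lemma conj_tuple_tuples: "h \<in> SL2 \<Longrightarrow> A \<in> tuples n \<Longrightarrow> conj_tuple h A \<in> tuples n"
  by (auto simp: tuples_def conj_tuple_def conj_SL2)

text \<open>For shorter lists, magnus_trace reads the undefined entries A!0 and A!1.\<close>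
lemma magnus_trace_conj_tuple:
  assumes "invertible h" "2 \<le> length A"
  shows "magnus_trace (conj_tuple h A) = magnus_trace A"
proof -
  have "0 < length A" "1 < length A" using assms(2) by linarith+
  with assms(1) show ?thesis
    by (simp add: magnus_trace_eq_iff conj_tuple_def trace_triple_def trace_conj conj_mult[symmetric])
qed

lemma conj_tuple_partial_transposes_if_magnus_trace_eq:
  assumes A: "A \<in> tuples n" and n: "2 \<le> n"
    and irreducible: "trace (commutator (A!0) (A!1)) \<noteq> 2"
    and symmetric: "transpose (A!0) = A!0" "transpose (A!1) = A!1"
    and X: "X \<in> tuples n" and XA: "magnus_trace X = magnus_trace A"
  shows "\<exists>h\<in>SL2. conj_tuple h X \<in> partial_transposes n A"
proof -
  have len: "length A = n" "length X = n" using A X by (simp_all add: tuples_def)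
  have A01: "A!0 \<in> SL2" "A!1 \<in> SL2" and X01: "X!0 \<in> SL2" "X!1 \<in> SL2"
    using A X n by (simp_all add: tuples_nth)
  have traces: "trace (X!0) = trace (A!0)" "trace (X!1) = trace (A!1)"
    "trace (X!0 ** X!1) = trace (A!0 ** A!1)"
    using XA len by (simp_all add: magnus_trace_eq_iff)
  then have "trace (commutator (X!0) (X!1)) \<noteq> 2"
    using irreducible A01 X01 by (simp add: trace_commutator_SL2)
  then obtain h where h: "h \<in> SL2" "conj h (X!0) = A!0" "conj h (X!1) = A!1"
    using ex_SL2_conj_pair_eq_traces[OF X01 A01 traces] by blast
  define C where "C = conj_tuple h X"
  have C: "C \<in> tuples n" using conj_tuple_tuples[OF h(1) X] by (simp add: C_def)
  have C01: "C!0 = A!0" "C!1 = A!1" using h n len by (simp_all add: C_def conj_tuple_def)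
  have "magnus_trace C = magnus_trace A"
    using magnus_trace_conj_tuple[OF SL2_invertible[OF h(1)]] XA n len by (simp add: C_def)
  then have triples: "trace_triple (A!0) (A!1) (C!k) = trace_triple (A!0) (A!1) (A!k)"
    if "k \<in> {2..<n}" for k
    using that C C01 len by (simp add: magnus_trace_eq_iff tuples_def)
  have "det (A!0 ** A!1 - A!1 ** A!0) \<noteq> 0"
    using irreducible A01 by (simp add: det_Lie_bracket_SL2)
  then have "C!k = A!k \<or> C!k = transpose (A!k)" if "k \<in> {2..<n}" for k
    using trace_triple_inj_symmetric[OF symmetric] triples[OF that] that
      tuples_nth[OF C] tuples_nth[OF A] by simp
  then have "C \<in> partial_transposes n A"
    using C C01 by (simp add: partial_transposes_def tuples_def)
  with h(1) show ?thesis by (auto simp: C_def)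
qed

lemma magnus_trace_fibre:
  assumes A: "A \<in> tuples n" and n: "2 \<le> n"
    and irreducible: "trace (commutator (A!0) (A!1)) \<noteq> 2"
    and symmetric: "transpose (A!0) = A!0" "transpose (A!1) = A!1"
  shows "{X \<in> tuples n. magnus_trace X = magnus_trace A} =
    {conj_tuple h C | h C. h \<in> SL2 \<and> C \<in> partial_transposes n A}"
proof (intro equalityI subsetI)
  fix X assume "X \<in> {X \<in> tuples n. magnus_trace X = magnus_trace A}"
  then obtain h where h: "h \<in> SL2" and C: "conj_tuple h X \<in> partial_transposes n A"
    using conj_tuple_partial_transposes_if_magnus_trace_eq[OF assms] by blast
  have "X = conj_tuple (matrix_inv h) (conj_tuple h X)"
    by (simp add: conj_tuple_def comp_def conj_matrix_inv_conj[OF SL2_invertible[OF h]])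
  with h C show "X \<in> {conj_tuple h C | h C. h \<in> SL2 \<and> C \<in> partial_transposes n A}"
    using matrix_inv_SL2 by blast
next
  fix X assume "X \<in> {conj_tuple h C | h C. h \<in> SL2 \<and> C \<in> partial_transposes n A}"
  then obtain h C where X: "X = conj_tuple h C" and h: "h \<in> SL2" and C: "C \<in> partial_transposes n A"
    by blast
  have "length A = n" using A by (simp add: tuples_def)
  moreover have "2 \<le> length C" using C n by (simp add: partial_transposes_def)
  ultimately have "magnus_trace X = magnus_trace A"
    using magnus_trace_conj_tuple[OF SL2_invertible[OF h]] magnus_trace_partial_transposes[OF symmetric _ C]
    by (simp add: X)
  moreover have "X \<in> tuples n"
    using conj_tuple_tuples[OF h partial_transposes_tuples[OF A C]] by (simp add: X)
  ultimately show "X \<in> {X \<in> tuples n. magnus_trace X = magnus_trace A}" by simp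
qed

theorem theorem1p3:
  fixes B1 B2 :: mat2
  assumes "B1 \<in> SL2" and "B2 \<in> SL2"
    and "trace (commutator B1 B2) \<noteq> 2"
  shows "(\<exists>g\<in>SL2. transpose (conj g B1) = conj g B1 \<and> transpose (conj g B2) = conj g B2)
    \<and> (\<forall>g\<in>SL2. transpose (conj g B1) = conj g B1 \<and> transpose (conj g B2) = conj g B2 \<longrightarrow>
         (let A1 = conj g B1; A2 = conj g B2;
              r = [trace A1, trace A2, trace (A1 ** A2)]
          in \<forall>n\<ge>3. \<forall>s::complex list. length s = 3 * n - 6 \<longrightarrow>
               (\<exists>As. length As = n - 2 \<and> set As \<subseteq> SL2 \<and>
                     magnus_trace ([A1, A2] @ As) = r @ s)
             \<and> (\<forall>A\<in>tuples n.
                   magnus_trace A = r @ s \<and> trace (commutator (A!0) (A!1)) \<noteq> 2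
                   \<and> transpose (A!0) = A!0 \<and> transpose (A!1) = A!1 \<longrightarrow>
                   (let S = {C. length C = n \<and> C!0 = A!0 \<and> C!1 = A!1 \<and>
                               (\<forall>j\<in>{2..<n}. C!j = A!j \<or> C!j = transpose (A!j))}
                    in finite S \<and>
                       {X\<in>tuples n. magnus_trace X = r @ s} =
                       {conj_tuple h C | h C. h \<in> SL2 \<and> C \<in> S}))))"
proof (unfold Let_def, intro conjI ballI impI allI, goal_cases)
  case 1
  show ?case using ex_SL2_conj_symmetric assms by (simp add: det_Lie_bracket_SL2)
next
  case (2 g n s)
  then have "det (conj g B1 ** conj g B2 - conj g B2 ** conj g B1) \<noteq> 0"
    using assms by (simp add: det_Lie_bracket_SL2 conj_SL2 trace_commutator_conj)
  moreover have "length s = 3 * (n - 2)" using 2 by simp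
  ultimately show ?case using magnus_trace_surj_symmetric 2 by blast
next
  case 3
  show ?case using finite_partial_transposes unfolding partial_transposes_def .
next
  case (4 g n s A)
  then show ?case using magnus_trace_fibre[of A n] by (simp add: partial_transposes_def)
qed

end
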